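(* Let $M$ be a realizable point-line configuration of rank $3$ on $[d]$, and let $l$ be a line of $M$ containing exactly three points. Let $N$ be the matroid on $[d]$ whose dependent sets are exactly the subsets $S\subseteq[d]$ such that $|S|\ge4$, or $S\supseteq l$, or $S$ contains two distinct elements of $[d]\setminus l$ (so $N$ has rank $3$, no loops, $\mathcal{C}_2(N)=\{\{i,j\}: i\ne j\in[d]\setminus l\}$ and $\mathcal{C}_3(N)=\{l\}$). Then $V_N\subseteq V_M$.
   Context: A point-line configuration on $[d]$ is a simple matroid of rank at most $3$; its lines are the maximal subsets of size $\ge3$ and rank $2$. $\mathcal{C}_i(N)$ denotes the set of circuits of size $i$ of a matroid $N$. For a matroid $N$ on $[d]$ of rank at most $3$, a realization is a tuple $\gamma=(\gamma_1,\dots,\gamma_d)\in(\mathbb{C}^3)^d\cong\mathbb{C}^{3d}$ such that for all $S\subseteq[d]$, $(\gamma_s)_{s\in S}$ is linearly dependent iff $S$ is dependent in $N$; $\Gamma_N$ is the set of realizations, $N$ is realizable if $\Gamma_N\ne\emptyset$, and $V_N$ is the Zariski closure of $\Gamma_N$ in $\mathbb{C}^{3d}$. *)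

theory Defs
  imports "HOL-Analysis.Analysis"
begin

definition matroid_on :: "nat \<Rightarrow> nat set set \<Rightarrow> bool" where
  "matroid_on d I \<longleftrightarrow>
     (\<forall>X\<in>I. X \<subseteq> {1..d}) \<and> {} \<in> I \<and>
     (\<forall>X Y. Y \<in> I \<longrightarrow> X \<subseteq> Y \<longrightarrow> X \<in> I) \<and>
     (\<forall>X Y. X \<in> I \<longrightarrow> Y \<in> I \<longrightarrow> card X < card Y \<longrightarrow> (\<exists>e\<in>Y - X. insert e X \<in> I))"

definition mrank :: "nat set set \<Rightarrow> nat set \<Rightarrow> nat" where
  "mrank I X = Max (card ` {J. J \<subseteq> X \<and> J \<in> I})"

definition simple_matroid :: "nat \<Rightarrow> nat set set \<Rightarrow> bool" where
  "simple_matroid d I \<longleftrightarrow> matroid_on d I \<and> (\<forall>X. X \<subseteq> {1..d} \<longrightarrow> card X \<le> 2 \<longrightarrow> X \<in> I)"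

definition point_line_config :: "nat \<Rightarrow> nat set set \<Rightarrow> bool" where
  "point_line_config d I \<longleftrightarrow> simple_matroid d I \<and> mrank I {1..d} \<le> 3"

definition is_line :: "nat \<Rightarrow> nat set set \<Rightarrow> nat set \<Rightarrow> bool" where
  "is_line d I L \<longleftrightarrow> L \<subseteq> {1..d} \<and> card L \<ge> 3 \<and> mrank I L = 2 \<and>
     (\<forall>L'. L \<subseteq> L' \<longrightarrow> L' \<subseteq> {1..d} \<longrightarrow> card L' \<ge> 3 \<longrightarrow> mrank I L' = 2 \<longrightarrow> L' = L)"

text \<open>Linear dependence of the family (\<gamma> s) indexed by s in S (repetitions count).\<close>
definition fam_dependent :: "(nat \<Rightarrow> complex^3) \<Rightarrow> nat set \<Rightarrow> bool" where
  "fam_dependent \<gamma> S \<longleftrightarrow> (\<exists>c. (\<Sum>s\<in>S. c s *s \<gamma> s) = 0 \<and> (\<exists>s\<in>S. c s \<noteq> 0))"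

text \<open>Points of C^{3d} are encoded as maps \<gamma> :: nat \<Rightarrow> complex^3 that vanish outside [d].\<close>
definition tuple_space :: "nat \<Rightarrow> (nat \<Rightarrow> complex^3) set" where
  "tuple_space d = {\<gamma>. \<forall>i. i \<notin> {1..d} \<longrightarrow> \<gamma> i = 0}"

definition realizations :: "nat \<Rightarrow> nat set set \<Rightarrow> (nat \<Rightarrow> complex^3) set" where
  "realizations d I = {\<gamma> \<in> tuple_space d. \<forall>S. S \<subseteq> {1..d} \<longrightarrow> (fam_dependent \<gamma> S \<longleftrightarrow> S \<notin> I)}"

definition realizable :: "nat \<Rightarrow> nat set set \<Rightarrow> bool" where
  "realizable d I \<longleftrightarrow> realizations d I \<noteq> {}"

inductive_set polyfun :: "nat \<Rightarrow> ((nat \<Rightarrow> complex^3) \<Rightarrow> complex) set" for d where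
  pf_const: "(\<lambda>_. c) \<in> polyfun d"
| pf_coord: "i \<in> {1..d} \<Longrightarrow> (\<lambda>\<gamma>. \<gamma> i $ j) \<in> polyfun d"
| pf_add: "f \<in> polyfun d \<Longrightarrow> g \<in> polyfun d \<Longrightarrow> (\<lambda>\<gamma>. f \<gamma> + g \<gamma>) \<in> polyfun d"
| pf_mult: "f \<in> polyfun d \<Longrightarrow> g \<in> polyfun d \<Longrightarrow> (\<lambda>\<gamma>. f \<gamma> * g \<gamma>) \<in> polyfun d"

definition zariski_closure :: "nat \<Rightarrow> (nat \<Rightarrow> complex^3) set \<Rightarrow> (nat \<Rightarrow> complex^3) set" where
  "zariski_closure d A = {\<gamma> \<in> tuple_space d. \<forall>f\<in>polyfun d. (\<forall>x\<in>A. f x = 0) \<longrightarrow> f \<gamma> = 0}"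

definition realization_space :: "nat \<Rightarrow> nat set set \<Rightarrow> (nat \<Rightarrow> complex^3) set" where
  "realization_space d I = zariski_closure d (realizations d I)"

definition N_indep :: "nat \<Rightarrow> nat set \<Rightarrow> nat set set" where
  "N_indep d l = {S. S \<subseteq> {1..d} \<and>
      \<not> (card S \<ge> 4 \<or> l \<subseteq> S \<or> (\<exists>i j. i \<noteq> j \<and> i \<in> S - l \<and> j \<in> S - l))}"

end

theory Submission
  imports Defs
begin

text \<open>Fix a realization \<open>\<gamma>\<close> of \<open>M\<close>, let \<open>\<rho>\<close> realize \<open>N\<close>, write \<open>l = {a, b, c}\<close> and pick
  \<open>j\<^sub>0\<close> off \<open>l\<close>; then \<open>a, b, j\<^sub>0\<close> give frames for both \<open>\<gamma>\<close> and \<open>\<rho>\<close>. Dependence of a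
  configuration is unchanged by a change of frame and by rescaling the vectors individually.
  So for \<open>t \<noteq> 0\<close> the frame map \<open>\<gamma> a, \<gamma> b, \<gamma> j\<^sub>0 \<mapsto> t \<rho> a, t \<rho> b, \<rho> j\<^sub>0\<close> (up to scalars)
  turns \<open>\<gamma>\<close> into a realization of \<open>M\<close> whose points on \<open>l\<close> stay at \<open>\<rho>\<close>, while the
  points off \<open>l\<close> tend to multiples of \<open>\<rho> j\<^sub>0\<close> as \<open>t \<rightarrow> 0\<close>, i.e. to \<open>\<rho>\<close>. Polynomials are
  continuous, so those vanishing on the realizations of \<open>M\<close> vanish at \<open>\<rho>\<close>.\<close>

section \<open>Frames in \<open>\<complex>\<^sup>3\<close>\<close>

definition lin_indep3 :: "complex^3 \<Rightarrow> complex^3 \<Rightarrow> complex^3 \<Rightarrow> bool" where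
  "lin_indep3 u v w \<longleftrightarrow> (\<forall>p q r. p *s u + q *s v + r *s w = 0 \<longrightarrow> p = 0 \<and> q = 0 \<and> r = 0)"

lemma lin_indep3_coords_unique:
  assumes "lin_indep3 u v w" and "p *s u + q *s v + r *s w = p' *s u + q' *s v + r' *s w"
  shows "p = p' \<and> q = q' \<and> r = r'"
proof -
  have "(p - p') *s u + (q - q') *s v + (r - r') *s w = 0"
    using assms(2) by (simp add: vector_sub_rdistrib algebra_simps)
  then have "p - p' = 0 \<and> q - q' = 0 \<and> r - r' = 0"
    using assms(1) unfolding lin_indep3_def by blast
  then show ?thesis by simp
qed

lemma lin_indep3_scale:
  assumes "lin_indep3 u v w" and "p \<noteq> 0" "q \<noteq> 0" "r \<noteq> 0"
  shows "lin_indep3 (p *s u) (q *s v) (r *s w)"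
  unfolding lin_indep3_def
proof (intro allI impI)
  fix p' q' r' assume "p' *s (p *s u) + q' *s (q *s v) + r' *s (r *s w) = 0"
  then have "(p' * p) *s u + (q' * q) *s v + (r' * r) *s w = 0"
    by (simp add: vector_smult_assoc)
  then have "p' * p = 0 \<and> q' * q = 0 \<and> r' * r = 0"
    using assms(1) unfolding lin_indep3_def by blast
  then show "p' = 0 \<and> q' = 0 \<and> r' = 0"
    using assms(2-4) by simp
qed

lemma lin_indep3_nonzero:
  assumes "lin_indep3 u v w"
  shows "u \<noteq> 0" "v \<noteq> 0" "w \<noteq> 0"
  using assms[unfolded lin_indep3_def, rule_format, of 1 0 0]
    assms[unfolded lin_indep3_def, rule_format, of 0 1 0]
    assms[unfolded lin_indep3_def, rule_format, of 0 0 1] by auto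

lemma lin_indep3_spans:
  assumes "lin_indep3 u v w"
  obtains p q r where "x = p *s u + q *s v + r *s w"
proof -
  have distinct: "u \<noteq> v" "u \<noteq> w" "v \<noteq> w"
    using assms[unfolded lin_indep3_def, rule_format, of 1 "-1" 0]
      assms[unfolded lin_indep3_def, rule_format, of 1 0 "-1"]
      assms[unfolded lin_indep3_def, rule_format, of 0 1 "-1"] by auto
  let ?B = "{u, v, w}"
  have "\<not> vec.dependent ?B"
  proof
    assume "vec.dependent ?B"
    then obtain c where "\<exists>y\<in>?B. c y \<noteq> 0" "(\<Sum>y\<in>?B. c y *s y) = 0"
      using vec.dependent_finite[of ?B] by auto
    moreover have "(\<Sum>y\<in>?B. c y *s y) = c u *s u + c v *s v + c w *s w"
      using distinct by (simp add: add.assoc)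
    ultimately show False using assms unfolding lin_indep3_def by auto
  qed
  moreover have "card ?B = vec.dim (UNIV :: (complex^3) set)"
    using distinct by (simp add: card_cart_basis)
  ultimately have "x \<in> vec.span ?B"
    using vec.card_eq_dim[of ?B UNIV] by auto
  then obtain p where "x - p *s u \<in> vec.span {v, w}" using vec.span_breakdown_eq by blast
  then obtain q where "x - p *s u - q *s v \<in> vec.span {w}" using vec.span_breakdown_eq by blast
  then obtain r where "x - p *s u - q *s v - r *s w \<in> vec.span {}" using vec.span_breakdown_eq by blast
  then have "x = p *s u + q *s v + r *s w" by (simp add: algebra_simps)
  then show thesis by (rule that)
qed

lemma lin_indep3_coord_functions:
  assumes frame: "lin_indep3 u v w"
  obtains X Y Z :: "complex^3 \<Rightarrow> complex"
  where "\<And>x. x = X x *s u + Y x *s v + Z x *s w"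
    and "\<And>p q r. X (p *s u + q *s v + r *s w) = p \<and> Y (p *s u + q *s v + r *s w) = q
            \<and> Z (p *s u + q *s v + r *s w) = r"
    and "\<And>x. lin_indep3 u v x \<Longrightarrow> Z x \<noteq> 0"
proof -
  have "\<forall>x. \<exists>p q r. x = p *s u + q *s v + r *s w"
  proof
    fix x
    obtain p q r where "x = p *s u + q *s v + r *s w" using lin_indep3_spans[OF frame] .
    then show "\<exists>p q r. x = p *s u + q *s v + r *s w" by blast
  qed
  then obtain X Y Z where coords: "\<And>x. x = X x *s u + Y x *s v + Z x *s w" by metis
  moreover have "X (p *s u + q *s v + r *s w) = p \<and> Y (p *s u + q *s v + r *s w) = q
      \<and> Z (p *s u + q *s v + r *s w) = r" for p q r
    using lin_indep3_coords_unique[OF frame coords[of "p *s u + q *s v + r *s w", symmetric]] .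
  moreover have "Z x \<noteq> 0" if "lin_indep3 u v x" for x
  proof
    assume "Z x = 0"
    then have "X x *s u + Y x *s v + (-1) *s x = 0"
      using coords[of x] by (simp add: vec_eq_iff)
    then show False using that unfolding lin_indep3_def by fastforce
  qed
  ultimately show thesis by (rule that)
qed

section \<open>Linear dependence of families\<close>

lemma fam_dependent_singleton: "fam_dependent \<gamma> {i} \<longleftrightarrow> \<gamma> i = 0"
  unfolding fam_dependent_def by (auto intro: exI[of _ "\<lambda>_. 1"])

lemma fam_dependent_pair_iff_multiple:
  assumes "i \<noteq> j" and "\<gamma> j \<noteq> 0"
  shows "fam_dependent \<gamma> {i, j} \<longleftrightarrow> (\<exists>s. \<gamma> i = s *s \<gamma> j)"
proof
  assume "fam_dependent \<gamma> {i, j}"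
  then obtain c where c: "c i *s \<gamma> i + c j *s \<gamma> j = 0" "c i \<noteq> 0 \<or> c j \<noteq> 0"
    using assms(1) unfolding fam_dependent_def by auto
  then have "c i \<noteq> 0" using assms(2) by auto
  with c(1) have "\<gamma> i = (- c j / c i) *s \<gamma> j"
    by (simp add: vec_eq_iff field_simps add_eq_0_iff)
  then show "\<exists>s. \<gamma> i = s *s \<gamma> j" ..
next
  assume "\<exists>s. \<gamma> i = s *s \<gamma> j"
  then obtain s where "\<gamma> i = s *s \<gamma> j" ..
  then show "fam_dependent \<gamma> {i, j}"
    using assms(1) unfolding fam_dependent_def
    by (intro exI[of _ "\<lambda>k. if k = i then 1 else - s"]) auto
qed

lemma fam_dependent_triple_iff:
  assumes "i \<noteq> j" "i \<noteq> k" "j \<noteq> k"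
  shows "fam_dependent \<gamma> {i, j, k} \<longleftrightarrow> \<not> lin_indep3 (\<gamma> i) (\<gamma> j) (\<gamma> k)"
proof
  assume "fam_dependent \<gamma> {i, j, k}"
  then obtain c where "c i *s \<gamma> i + c j *s \<gamma> j + c k *s \<gamma> k = 0" "c i \<noteq> 0 \<or> c j \<noteq> 0 \<or> c k \<noteq> 0"
    using assms unfolding fam_dependent_def by (auto simp: add.assoc)
  then show "\<not> lin_indep3 (\<gamma> i) (\<gamma> j) (\<gamma> k)" unfolding lin_indep3_def by blast
next
  assume "\<not> lin_indep3 (\<gamma> i) (\<gamma> j) (\<gamma> k)"
  then obtain p q r where "p *s \<gamma> i + q *s \<gamma> j + r *s \<gamma> k = 0" "p \<noteq> 0 \<or> q \<noteq> 0 \<or> r \<noteq> 0"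
    unfolding lin_indep3_def by blast
  then show "fam_dependent \<gamma> {i, j, k}"
    using assms unfolding fam_dependent_def
    by (intro exI[of _ "\<lambda>s. if s = i then p else if s = j then q else r"]) (auto simp: add.assoc)
qed

lemma sum_scale_coords:
  fixes v1 v2 v3 :: "complex^3"
  shows "(\<Sum>s\<in>S. c s *s (x s *s v1 + y s *s v2 + z s *s v3)) =
     (\<Sum>s\<in>S. c s * x s) *s v1 + (\<Sum>s\<in>S. c s * y s) *s v2 + (\<Sum>s\<in>S. c s * z s) *s v3"
  by (simp add: vec_eq_iff sum_component sum.distrib sum_distrib_right mult.assoc)

lemma fam_dependent_coords_iff:
  assumes frame: "lin_indep3 v1 v2 v3" and "finite S"
    and \<theta>: "\<And>i. i \<in> S \<Longrightarrow> \<theta> i = m i *s (x i *s v1 + y i *s v2 + z i *s v3)"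
    and m: "\<And>i. i \<in> S \<Longrightarrow> m i \<noteq> 0"
  shows "fam_dependent \<theta> S \<longleftrightarrow> (\<exists>c. (\<Sum>s\<in>S. c s * x s) = 0 \<and> (\<Sum>s\<in>S. c s * y s) = 0
            \<and> (\<Sum>s\<in>S. c s * z s) = 0 \<and> (\<exists>s\<in>S. c s \<noteq> 0))"
proof
  assume "fam_dependent \<theta> S"
  then obtain c s0 where c: "(\<Sum>s\<in>S. c s *s \<theta> s) = 0" "s0 \<in> S" "c s0 \<noteq> 0"
    unfolding fam_dependent_def by blast
  have "(\<Sum>s\<in>S. c s *s \<theta> s) = (\<Sum>s\<in>S. (c s * m s) *s (x s *s v1 + y s *s v2 + z s *s v3))"
    by (rule sum.cong) (simp_all add: \<theta> mult.assoc)
  also have "\<dots> = (\<Sum>s\<in>S. c s * m s * x s) *s v1 + (\<Sum>s\<in>S. c s * m s * y s) *s v2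
      + (\<Sum>s\<in>S. c s * m s * z s) *s v3"
    by (rule sum_scale_coords)
  finally have "(\<Sum>s\<in>S. c s * m s * x s) *s v1 + (\<Sum>s\<in>S. c s * m s * y s) *s v2
      + (\<Sum>s\<in>S. c s * m s * z s) *s v3 = 0"
    using c(1) by simp
  with frame have "(\<Sum>s\<in>S. c s * m s * x s) = 0 \<and> (\<Sum>s\<in>S. c s * m s * y s) = 0
      \<and> (\<Sum>s\<in>S. c s * m s * z s) = 0"
    unfolding lin_indep3_def by blast
  with c(2,3) m[OF c(2)] show "\<exists>c. (\<Sum>s\<in>S. c s * x s) = 0 \<and> (\<Sum>s\<in>S. c s * y s) = 0
            \<and> (\<Sum>s\<in>S. c s * z s) = 0 \<and> (\<exists>s\<in>S. c s \<noteq> 0)"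
    by (intro exI[of _ "\<lambda>s. c s * m s"]) auto
next
  assume "\<exists>c. (\<Sum>s\<in>S. c s * x s) = 0 \<and> (\<Sum>s\<in>S. c s * y s) = 0
            \<and> (\<Sum>s\<in>S. c s * z s) = 0 \<and> (\<exists>s\<in>S. c s \<noteq> 0)"
  then obtain c s0 where c: "(\<Sum>s\<in>S. c s * x s) = 0" "(\<Sum>s\<in>S. c s * y s) = 0"
            "(\<Sum>s\<in>S. c s * z s) = 0" "s0 \<in> S" "c s0 \<noteq> 0" by blast
  have "(\<Sum>s\<in>S. (c s / m s) *s \<theta> s) = (\<Sum>s\<in>S. c s *s (x s *s v1 + y s *s v2 + z s *s v3))"
    by (rule sum.cong) (simp_all add: \<theta> m)
  also have "\<dots> = 0" using c(1-3) by (simp only: sum_scale_coords) simp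
  finally show "fam_dependent \<theta> S" unfolding fam_dependent_def
    using c(4,5) m[of s0] by (intro exI[of _ "\<lambda>s. c s / m s"]) auto
qed

lemma realizations_change_of_frame:
  assumes \<gamma>: "\<gamma> \<in> realizations d I" and \<theta>: "\<theta> \<in> tuple_space d"
    and frames: "lin_indep3 u1 u2 u3" "lin_indep3 v1 v2 v3"
    and \<gamma>_coords: "\<And>i. i \<in> {1..d} \<Longrightarrow> \<gamma> i = x i *s u1 + y i *s u2 + z i *s u3"
    and \<theta>_coords: "\<And>i. i \<in> {1..d} \<Longrightarrow> \<theta> i = k i *s (x i *s v1 + y i *s v2 + z i *s v3)"
    and k: "\<And>i. i \<in> {1..d} \<Longrightarrow> k i \<noteq> 0"
  shows "\<theta> \<in> realizations d I"
proof -
  have "fam_dependent \<theta> S \<longleftrightarrow> S \<notin> I" if S: "S \<subseteq> {1..d}" for S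
  proof -
    have "finite S" using S finite_subset by blast
    have "fam_dependent \<theta> S \<longleftrightarrow> (\<exists>c. (\<Sum>s\<in>S. c s * x s) = 0 \<and> (\<Sum>s\<in>S. c s * y s) = 0
            \<and> (\<Sum>s\<in>S. c s * z s) = 0 \<and> (\<exists>s\<in>S. c s \<noteq> 0))"
      by (rule fam_dependent_coords_iff[OF frames(2) \<open>finite S\<close>]) (use S \<theta>_coords k in auto)
    also have "\<dots> \<longleftrightarrow> fam_dependent \<gamma> S"
      by (rule fam_dependent_coords_iff[OF frames(1) \<open>finite S\<close>, where m = "\<lambda>_. 1", symmetric])
        (use S \<gamma>_coords in auto)
    also have "\<dots> \<longleftrightarrow> S \<notin> I" using \<gamma> S unfolding realizations_def by blast
    finally show ?thesis .
  qed
  with \<theta> show ?thesis unfolding realizations_def by blast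
qed

lemma collinear_point_coords:
  assumes distinct: "a \<noteq> b" "a \<noteq> c" "b \<noteq> c"
    and frame: "lin_indep3 (\<theta> a) (\<theta> b) w"
    and abc: "fam_dependent \<theta> {a, b, c}"
    and ac: "\<not> fam_dependent \<theta> {a, c}" and bc: "\<not> fam_dependent \<theta> {b, c}"
  obtains \<alpha> \<beta> where "\<theta> c = \<alpha> *s \<theta> a + \<beta> *s \<theta> b" "\<alpha> \<noteq> 0" "\<beta> \<noteq> 0"
proof -
  obtain p q r where c: "\<theta> c = p *s \<theta> a + q *s \<theta> b + r *s w"
    using lin_indep3_spans[OF frame] .
  obtain p' q' r' where rel: "p' *s \<theta> a + q' *s \<theta> b + r' *s \<theta> c = 0"
    and nontriv: "p' \<noteq> 0 \<or> q' \<noteq> 0 \<or> r' \<noteq> 0"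
    using abc unfolding fam_dependent_triple_iff[OF distinct] lin_indep3_def by blast
  have "(p' + r' * p) *s \<theta> a + (q' + r' * q) *s \<theta> b + (r' * r) *s w = 0"
    using rel unfolding c by (simp add: vec_eq_iff algebra_simps)
  then have "p' + r' * p = 0" "q' + r' * q = 0" "r' * r = 0"
    using frame unfolding lin_indep3_def by blast+
  with nontriv have "r = 0" by auto
  have "p \<noteq> 0"
  proof
    assume "p = 0"
    then have "\<theta> c = q *s \<theta> b" using c \<open>r = 0\<close> by simp
    then have "fam_dependent \<theta> {c, b}"
      using fam_dependent_pair_iff_multiple[of c b \<theta>] distinct lin_indep3_nonzero(2)[OF frame]
      by auto
    then show False using bc by (simp add: insert_commute)
  qed
  moreover have "q \<noteq> 0"
  proof
    assume "q = 0"
    then have "\<theta> c = p *s \<theta> a" using c \<open>r = 0\<close> by simp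
    then have "fam_dependent \<theta> {c, a}"
      using fam_dependent_pair_iff_multiple[of c a \<theta>] distinct lin_indep3_nonzero(1)[OF frame]
      by auto
    then show False using ac by (simp add: insert_commute)
  qed
  ultimately show thesis using that c \<open>r = 0\<close> by simp
qed

lemma realizations_dependent_iff:
  assumes "\<gamma> \<in> realizations d I" "S \<subseteq> {1..d}"
  shows "fam_dependent \<gamma> S \<longleftrightarrow> S \<notin> I"
  using assms unfolding realizations_def by blast

section \<open>Lines of a matroid\<close>

lemma mrank_ge_card:
  assumes "finite X" "J \<subseteq> X" "J \<in> I"
  shows "card J \<le> mrank I X"
  unfolding mrank_def using assms by (intro Max_ge) (auto intro: finite_subset[of _ "card ` Pow X"])

lemma mrank_attained:
  assumes "finite X" "{} \<in> I"
  obtains J where "J \<subseteq> X" "J \<in> I" "card J = mrank I X"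
proof -
  have "finite (card ` {J. J \<subseteq> X \<and> J \<in> I})"
    using assms by (auto intro: finite_subset[of _ "card ` Pow X"])
  moreover have "{J. J \<subseteq> X \<and> J \<in> I} \<noteq> {}" using assms by auto
  ultimately have "mrank I X \<in> card ` {J. J \<subseteq> X \<and> J \<in> I}"
    unfolding mrank_def by (intro Max_in) auto
  then show thesis using that by auto
qed

lemma line_subset_dependent:
  assumes "is_line d I l" "S \<subseteq> l" "card S \<ge> 3"
  shows "S \<notin> I"
proof
  assume "S \<in> I"
  have "finite l" using assms(1) unfolding is_line_def by (meson finite_atLeastAtMost finite_subset)
  then have "card S \<le> mrank I l" using mrank_ge_card assms(2) \<open>S \<in> I\<close> by blast
  then show False using assms(1,3) unfolding is_line_def by simp
qed

lemma exists_point_off_line: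
  assumes "matroid_on d I" "mrank I {1..d} = 3" "is_line d I l"
  obtains j where "j \<in> {1..d} - l"
proof -
  obtain J where J: "J \<subseteq> {1..d}" "J \<in> I" "card J = 3"
    using mrank_attained[of "{1..d}" I] assms(1,2) unfolding matroid_on_def by auto
  then have "\<not> J \<subseteq> l" using line_subset_dependent[OF assms(3)] by auto
  with J(1) show thesis using that by blast
qed

text \<open>Otherwise \<open>insert j l\<close> would still have rank 2, against the maximality of \<open>l\<close>.\<close>

lemma line_pair_insert_indep:
  assumes M: "matroid_on d I" and line: "is_line d I l"
    and ab: "a \<in> l" "b \<in> l" "a \<noteq> b" "{a, b} \<in> I" and j: "j \<in> {1..d} - l"
  shows "{a, b, j} \<in> I"
proof (rule ccontr)
  assume abj: "{a, b, j} \<notin> I"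
  have l: "l \<subseteq> {1..d}" "card l \<ge> 3" "finite l"
    using line unfolding is_line_def by (auto intro: finite_subset)
  have l_max: "\<And>L'. l \<subseteq> L' \<Longrightarrow> L' \<subseteq> {1..d} \<Longrightarrow> card L' \<ge> 3 \<Longrightarrow> mrank I L' = 2 \<Longrightarrow> L' = l"
    using line unfolding is_line_def by blast
  have aug: "\<And>X Y. X \<in> I \<Longrightarrow> Y \<in> I \<Longrightarrow> card X < card Y \<Longrightarrow> \<exists>e\<in>Y - X. insert e X \<in> I"
    using M unfolding matroid_on_def by blast
  let ?L = "insert j l"
  have rank_le: "card K \<le> 2" if K: "K \<subseteq> ?L" "K \<in> I" for K
  proof (rule ccontr)
    assume "\<not> card K \<le> 2"
    then have "card {a, b} < card K" using ab by simp
    then obtain e where e: "e \<in> K - {a, b}" "insert e {a, b} \<in> I"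
      using aug[OF ab(4) K(2)] by blast
    show False
    proof (cases "e = j")
      case True
      then show False using e(2) abj by (simp add: insert_commute)
    next
      case False
      then have "{e, a, b} \<subseteq> l" "card {e, a, b} = 3" using e K ab by auto
      then show False using e(2) line_subset_dependent[OF line] by auto
    qed
  qed
  have "{} \<in> I" using M unfolding matroid_on_def by blast
  then obtain K where "K \<subseteq> ?L" "K \<in> I" "card K = mrank I ?L"
    using mrank_attained[of ?L I] l(3) by blast
  then have "mrank I ?L \<le> 2" using rank_le by metis
  moreover have "2 \<le> mrank I ?L" using mrank_ge_card[of ?L "{a, b}" I] ab l by simp
  moreover have "card ?L \<ge> 3" using l j by simp
  ultimately have "?L = l" using j l(1) by (intro l_max) auto
  then show False using j by auto
qed

section \<open>Zariski closure\<close>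

lemma zariski_closure_subset:
  assumes "A \<subseteq> zariski_closure d B"
  shows "zariski_closure d A \<subseteq> zariski_closure d B"
  using assms unfolding zariski_closure_def by blast

lemma polyfun_continuous_on_curve:
  fixes \<delta> :: "complex \<Rightarrow> nat \<Rightarrow> complex^3"
  assumes "f \<in> polyfun d" and "\<And>i j. continuous_on UNIV (\<lambda>t. \<delta> t i $ j)"
  shows "continuous_on UNIV (\<lambda>t. f (\<delta> t))"
  using assms(1) by induction (auto intro!: continuous_intros assms(2))

lemma curve_limit_in_zariski_closure:
  fixes \<delta> :: "complex \<Rightarrow> nat \<Rightarrow> complex^3"
  assumes cont: "\<And>i j. continuous_on UNIV (\<lambda>t. \<delta> t i $ j)"
    and in_A: "\<And>t. t \<noteq> 0 \<Longrightarrow> \<delta> t \<in> A" and "\<delta> 0 \<in> tuple_space d"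
  shows "\<delta> 0 \<in> zariski_closure d A"
  unfolding zariski_closure_def
proof (intro CollectI conjI ballI impI)
  fix f assume f: "f \<in> polyfun d" and vanish: "\<forall>x\<in>A. f x = 0"
  have "isCont (\<lambda>t. f (\<delta> t)) 0"
    using polyfun_continuous_on_curve[OF f cont] by (simp add: continuous_on_eq_continuous_at)
  then have "((\<lambda>t. f (\<delta> t)) \<longlongrightarrow> f (\<delta> 0)) (at 0)" by (simp add: isCont_def)
  moreover have "((\<lambda>t. f (\<delta> t)) \<longlongrightarrow> 0) (at 0)"
    by (rule tendsto_eventually) (simp add: eventually_at_filter in_A vanish)
  ultimately show "f (\<delta> 0) = 0" by (rule LIM_unique)
qed (fact assms(3))

section \<open>Degenerating realizations\<close>

text \<open>The scalars \<open>t \<alpha>'/\<alpha>\<close> and \<open>t \<beta>'/\<beta>\<close> make the frame map send \<open>\<gamma> c\<close> to \<open>t \<rho> c\<close>,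
  so the points of \<open>l\<close> can be kept at \<open>\<rho>\<close> along the whole curve.\<close>

lemma degeneration_in_zariski_closure:
  assumes \<gamma>: "\<gamma> \<in> realizations d I" and \<rho>: "\<rho> \<in> tuple_space d"
    and l: "l = {a, b, c}" "a \<noteq> b" "a \<noteq> c" "b \<noteq> c" "l \<subseteq> {1..d}" and j0: "j0 \<in> {1..d} - l"
    and \<gamma>_frame: "lin_indep3 (\<gamma> a) (\<gamma> b) (\<gamma> j0)" and \<rho>_frame: "lin_indep3 (\<rho> a) (\<rho> b) (\<rho> j0)"
    and \<gamma>_c: "\<gamma> c = \<alpha> *s \<gamma> a + \<beta> *s \<gamma> b" and \<rho>_c: "\<rho> c = \<alpha>' *s \<rho> a + \<beta>' *s \<rho> b"
    and nz: "\<alpha> \<noteq> 0" "\<beta> \<noteq> 0" "\<alpha>' \<noteq> 0" "\<beta>' \<noteq> 0"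
    and \<gamma>_off: "\<And>j. j \<in> {1..d} - l \<Longrightarrow> lin_indep3 (\<gamma> a) (\<gamma> b) (\<gamma> j)"
    and \<rho>_off: "\<And>j. j \<in> {1..d} - l \<Longrightarrow> \<rho> j = s j *s \<rho> j0 \<and> s j \<noteq> 0"
  shows "\<rho> \<in> zariski_closure d (realizations d I)"
proof -
  obtain X Y Z where coords: "\<And>v. v = X v *s \<gamma> a + Y v *s \<gamma> b + Z v *s \<gamma> j0"
    and coords_eq: "\<And>p q r. X (p *s \<gamma> a + q *s \<gamma> b + r *s \<gamma> j0) = p
       \<and> Y (p *s \<gamma> a + q *s \<gamma> b + r *s \<gamma> j0) = q \<and> Z (p *s \<gamma> a + q *s \<gamma> b + r *s \<gamma> j0) = r"
    and Z_nonzero: "\<And>v. lin_indep3 (\<gamma> a) (\<gamma> b) v \<Longrightarrow> Z v \<noteq> 0"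
    using lin_indep3_coord_functions[OF \<gamma>_frame] by blast
  have coords_abc: "X (\<gamma> a) = 1" "Y (\<gamma> a) = 0" "Z (\<gamma> a) = 0" "X (\<gamma> b) = 0" "Y (\<gamma> b) = 1"
    "Z (\<gamma> b) = 0" "X (\<gamma> c) = \<alpha>" "Y (\<gamma> c) = \<beta>" "Z (\<gamma> c) = 0"
    using coords_eq[of 1 0 0] coords_eq[of 0 1 0] coords_eq[of \<alpha> \<beta> 0] \<gamma>_c by simp_all
  have Z_off: "Z (\<gamma> j) \<noteq> 0" if "j \<in> {1..d} - l" for j
    using Z_nonzero \<gamma>_off that by blast
  define L where "L t v = X v *s ((t * \<alpha>' / \<alpha>) *s \<rho> a) + Y v *s ((t * \<beta>' / \<beta>) *s \<rho> b) + Z v *s \<rho> j0"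
    for t v
  define \<delta> where "\<delta> t i = (if i \<in> {1..d} - l then (s i / Z (\<gamma> i)) *s L t (\<gamma> i) else \<rho> i)" for t i
  have "\<delta> 0 = \<rho>"
    using \<rho>_off Z_off unfolding \<delta>_def L_def by (auto simp: fun_eq_iff vec_eq_iff)
  moreover have "\<delta> t \<in> realizations d I" if t: "t \<noteq> 0" for t
  proof (rule realizations_change_of_frame[OF \<gamma> _ \<gamma>_frame])
    show "\<delta> t \<in> tuple_space d" using \<rho> unfolding tuple_space_def \<delta>_def by simp
    show "lin_indep3 ((t * \<alpha>' / \<alpha>) *s \<rho> a) ((t * \<beta>' / \<beta>) *s \<rho> b) (1 *s \<rho> j0)"
      using lin_indep3_scale[OF \<rho>_frame, of "t * \<alpha>' / \<alpha>" "t * \<beta>' / \<beta>" 1] t nz by simp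
    show "\<gamma> i = X (\<gamma> i) *s \<gamma> a + Y (\<gamma> i) *s \<gamma> b + Z (\<gamma> i) *s \<gamma> j0" for i
      by (rule coords)
    define k where "k i = (if i = a then \<alpha> / (t * \<alpha>') else if i = b then \<beta> / (t * \<beta>')
      else if i = c then 1 / t else s i / Z (\<gamma> i))" for i
    show "k i \<noteq> 0" if "i \<in> {1..d}" for i
      using that l t nz \<rho>_off[of i] Z_off[of i] unfolding k_def by auto
    show "\<delta> t i = k i *s (X (\<gamma> i) *s ((t * \<alpha>' / \<alpha>) *s \<rho> a) + Y (\<gamma> i) *s ((t * \<beta>' / \<beta>) *s \<rho> b)
        + Z (\<gamma> i) *s (1 *s \<rho> j0))" if "i \<in> {1..d}" for i
      using that l t nz coords_abc \<rho>_c
      unfolding \<delta>_def k_def L_def by (auto simp: vec_eq_iff field_simps)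
  qed
  moreover have "continuous_on UNIV (\<lambda>t. \<delta> t i $ j)" for i j
    unfolding \<delta>_def L_def
    by (cases "i \<in> {1..d} - l") (auto simp: nz Z_off intro!: continuous_intros)
  ultimately show ?thesis
    using curve_limit_in_zariski_closure[of \<delta> "realizations d I" d] \<rho> by metis
qed

section \<open>Realizations of \<open>N\<close>\<close>

lemma N_realization_structure:
  assumes l: "l = {a, b, c}" "a \<noteq> b" "a \<noteq> c" "b \<noteq> c" "l \<subseteq> {1..d}" and j0: "j0 \<in> {1..d} - l"
    and \<rho>: "\<rho> \<in> realizations d (N_indep d l)"
  shows "lin_indep3 (\<rho> a) (\<rho> b) (\<rho> j0)" "fam_dependent \<rho> {a, b, c}"
    and "\<not> fam_dependent \<rho> {a, c}" "\<not> fam_dependent \<rho> {b, c}"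
    and "\<And>j. j \<in> {1..d} - l \<Longrightarrow> \<exists>s. \<rho> j = s *s \<rho> j0 \<and> s \<noteq> 0"
proof -
  note dep = realizations_dependent_iff[OF \<rho>]
  have distinct: "a \<noteq> j0" "b \<noteq> j0" using l j0 by auto
  show frame: "lin_indep3 (\<rho> a) (\<rho> b) (\<rho> j0)"
    using dep[of "{a, b, j0}"] l j0 fam_dependent_triple_iff[OF l(2) distinct]
    by (auto simp: N_indep_def card_insert_if)
  show "fam_dependent \<rho> {a, b, c}" using dep[of l] l by (simp add: N_indep_def)
  show "\<not> fam_dependent \<rho> {a, c}" "\<not> fam_dependent \<rho> {b, c}"
    using dep[of "{a, c}"] dep[of "{b, c}"] l by (auto simp: N_indep_def card_insert_if)
  fix j assume j: "j \<in> {1..d} - l"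
  have "\<rho> j \<noteq> 0"
    using dep[of "{j}"] j l fam_dependent_singleton by (auto simp: N_indep_def)
  moreover have "\<exists>s. \<rho> j = s *s \<rho> j0"
  proof (cases "j = j0")
    case False
    have "fam_dependent \<rho> {j, j0}" using dep[of "{j, j0}"] j j0 False by (auto simp: N_indep_def)
    then show ?thesis
      using fam_dependent_pair_iff_multiple[of j j0 \<rho>] False lin_indep3_nonzero(3)[OF frame] by blast
  qed (auto intro: exI[of _ 1])
  ultimately show "\<exists>s. \<rho> j = s *s \<rho> j0 \<and> s \<noteq> 0" by auto
qed

lemma N_realization_in_realization_space:
  assumes \<gamma>: "\<gamma> \<in> realizations d I" and \<rho>: "\<rho> \<in> realizations d (N_indep d l)"
    and l: "l = {a, b, c}" "a \<noteq> b" "a \<noteq> c" "b \<noteq> c" "l \<subseteq> {1..d}" and j0: "j0 \<in> {1..d} - l"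
    and I: "l \<notin> I" "{a, c} \<in> I" "{b, c} \<in> I" "\<And>j. j \<in> {1..d} - l \<Longrightarrow> {a, b, j} \<in> I"
  shows "\<rho> \<in> realization_space d I"
proof -
  note dep = realizations_dependent_iff[OF \<gamma>]
  have \<gamma>_off: "lin_indep3 (\<gamma> a) (\<gamma> b) (\<gamma> j)" if j: "j \<in> {1..d} - l" for j
  proof -
    have "a \<noteq> j" "b \<noteq> j" using j l by auto
    moreover have "{a, b, j} \<subseteq> {1..d}" using j l by auto
    ultimately show ?thesis
      using dep[of "{a, b, j}"] I(4)[OF j] fam_dependent_triple_iff[OF l(2)] by blast
  qed
  obtain \<alpha> \<beta> where \<gamma>_c: "\<gamma> c = \<alpha> *s \<gamma> a + \<beta> *s \<gamma> b" "\<alpha> \<noteq> 0" "\<beta> \<noteq> 0"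
  proof (rule collinear_point_coords[OF l(2-4) \<gamma>_off[OF j0]])
    show "fam_dependent \<gamma> {a, b, c}" using dep[of l] I(1) l by simp
    show "\<not> fam_dependent \<gamma> {a, c}" "\<not> fam_dependent \<gamma> {b, c}"
      using dep[of "{a, c}"] dep[of "{b, c}"] I(2,3) l by auto
  qed
  note \<rho>_facts = N_realization_structure[OF l j0 \<rho>]
  obtain \<alpha>' \<beta>' where \<rho>_c: "\<rho> c = \<alpha>' *s \<rho> a + \<beta>' *s \<rho> b" "\<alpha>' \<noteq> 0" "\<beta>' \<noteq> 0"
    using collinear_point_coords[OF l(2-4) \<rho>_facts(1-4)] .
  obtain s where \<rho>_off: "\<And>j. j \<in> {1..d} - l \<Longrightarrow> \<rho> j = s j *s \<rho> j0 \<and> s j \<noteq> 0"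
    using \<rho>_facts(5) by metis
  have "\<rho> \<in> tuple_space d" using \<rho> unfolding realizations_def by blast
  from degeneration_in_zariski_closure[OF \<gamma> this l j0 \<gamma>_off[OF j0] \<rho>_facts(1) \<gamma>_c(1) \<rho>_c(1)
      \<gamma>_c(2,3) \<rho>_c(2,3) \<gamma>_off \<rho>_off]
  show ?thesis unfolding realization_space_def .
qed

theorem mainTheorem9:
  fixes d :: nat and I :: "nat set set" and l :: "nat set"
  assumes "point_line_config d I"
    and "mrank I {1..d} = 3"
    and "realizable d I"
    and "is_line d I l"
    and "card l = 3"
  shows "realization_space d (N_indep d l) \<subseteq> realization_space d I"
proof -
  obtain a b c where l: "l = {a, b, c}" "a \<noteq> b" "a \<noteq> c" "b \<noteq> c"
    using assms(5) unfolding card_3_iff by blast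
  have M: "matroid_on d I" and pairs: "\<And>X. X \<subseteq> {1..d} \<Longrightarrow> card X \<le> 2 \<Longrightarrow> X \<in> I"
    using assms(1) unfolding point_line_config_def simple_matroid_def by auto
  have l_sub: "l \<subseteq> {1..d}" using assms(4) unfolding is_line_def by blast
  obtain j0 where j0: "j0 \<in> {1..d} - l" using exists_point_off_line[OF M assms(2,4)] .
  obtain \<gamma> where \<gamma>: "\<gamma> \<in> realizations d I" using assms(3) unfolding realizable_def by blast
  have "l \<notin> I" using line_subset_dependent[OF assms(4) subset_refl] assms(5) by simp
  moreover have "{a, b} \<in> I" "{a, c} \<in> I" "{b, c} \<in> I"
    using l l_sub by (simp_all add: pairs card_insert_if)
  moreover have "\<And>j. j \<in> {1..d} - l \<Longrightarrow> {a, b, j} \<in> I"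
    using line_pair_insert_indep[OF M assms(4) _ _ l(2) \<open>{a, b} \<in> I\<close>] l(1) by blast
  ultimately have "realizations d (N_indep d l) \<subseteq> realization_space d I"
    using N_realization_in_realization_space[OF \<gamma> _ l l_sub j0] by blast
  then show ?thesis unfolding realization_space_def by (rule zariski_closure_subset)
qed

end
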